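(* The propagation detector $\mathit{PROP}$ is equivalent to the age detector $\mathit{AGE}$: $\mathit{PROP} \equiv \mathit{AGE}$.
   Context: Setting: peers communicate over reliable FIFO channels in a purely asynchronous system; a network split (at most one per computation, no reconnection) divides the network into two nonempty partitions, after which messages are delivered only within the sender's partition; messages sent before the split are delivered to all peers. Each mined block is broadcast immediately after mining. A detector is an algorithm whose actions may use information outside the model; its output variables are read by another algorithm $\mathit{ALG}$, and the actions of the two interleave fairly. For a block detector, each peer has, per block, an input variable $in$ and an output variable $out$, both initially $\bot$; $\mathit{ALG}$ writes $in$ and reads $out$. $\mathit{PROP}$: if a suffix of the computation has $in=b$ for a block $b$ mined by $\mathit{ALG}$, then $out$ is $\bot$ on a prefix and then permanently $\mathbf{true}$ if $b$ was received by all peers of the network, or permanently $\mathbf{false}$ if $b$ was delivered only within a partition. $\mathit{AGE}$: same, but the final permanent output is $old$ if $b$ was mined before the split and $new$ if mined after it. Detector $A$ is weaker than detector $B$ if there is an algorithm that takes every computation of $A$ and produces a computation of $B$. $A \equiv B$ if each is weaker than the other; $A \prec B$ (A strictly weaker than $B$) if $A$ is weaker than $B$ but not equivalent. *)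

theory Defs
  imports Main
begin

(* Abstract model of the setting.
   'p : peers (finite), 'b : blocks, time is nat (global discrete time of the
   fair interleaving).  Detector instances are indexed per block ('b). *)

record ('p, 'b) env =
  split_time :: "nat option"     (* None: no split ever happens *)
  side       :: "'p set"         (* one partition; the other is its complement *)
  mined      :: "'b \<Rightarrow> ('p \<times> nat) option"  (* miner and mining time of blocks mined by ALG *)
  recv       :: "'b \<Rightarrow> 'p \<Rightarrow> bool"  (* peer eventually receives the block *)

definition mined_before_split :: "('p, 'b) env \<Rightarrow> nat \<Rightarrow> bool" where
  "mined_before_split E tm \<longleftrightarrow> (case split_time E of None \<Rightarrow> True | Some ts \<Rightarrow> tm < ts)"

definition partition_of :: "('p, 'b) env \<Rightarrow> 'p \<Rightarrow> 'p set" where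
  "partition_of E q = (if q \<in> side E then side E else - side E)"

definition valid_env :: "('p, 'b) env \<Rightarrow> bool" where
  "valid_env E \<longleftrightarrow>
     (split_time E \<noteq> None \<longrightarrow> side E \<noteq> {} \<and> side E \<noteq> UNIV) \<and>
     (\<forall>b q tm. mined E b = Some (q, tm) \<longrightarrow>
        (if mined_before_split E tm then (\<forall>p. recv E b p)
         else (\<forall>p. recv E b p \<longleftrightarrow> p \<in> partition_of E q)))"

definition received_by_all :: "('p, 'b) env \<Rightarrow> 'b \<Rightarrow> bool" where
  "received_by_all E b \<longleftrightarrow> (\<forall>p. recv E b p)"

definition delivered_only_within_partition :: "('p, 'b) env \<Rightarrow> 'b \<Rightarrow> bool" where
  "delivered_only_within_partition E b \<longleftrightarrow>
     split_time E \<noteq> None \<and>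
     (\<exists>P \<in> {side E, - side E}. \<forall>p. recv E b p \<longleftrightarrow> p \<in> P)"

(* histories of the detector variables: value at time t, peer p, instance (block) k;
   None plays the role of \<bottom> *)
type_synonym ('p, 'b) in_hist = "nat \<Rightarrow> 'p \<Rightarrow> 'b \<Rightarrow> 'b option"
type_synonym ('p, 'b, 'o) out_hist = "nat \<Rightarrow> 'p \<Rightarrow> 'b \<Rightarrow> 'o option"

(* a detector = its set of admissible computations (env, in-history, out-history) *)
type_synonym ('p, 'b, 'o) detector =
  "('p, 'b) env \<Rightarrow> ('p, 'b) in_hist \<Rightarrow> ('p, 'b, 'o) out_hist \<Rightarrow> bool"

definition eventually_always_in :: "('p, 'b) in_hist \<Rightarrow> 'p \<Rightarrow> 'b \<Rightarrow> 'b \<Rightarrow> bool" where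
  "eventually_always_in inp p k b \<longleftrightarrow> (\<exists>t0. \<forall>t\<ge>t0. inp t p k = Some b)"

definition bot_then_forever :: "('p, 'b, 'o) out_hist \<Rightarrow> 'p \<Rightarrow> 'b \<Rightarrow> 'o \<Rightarrow> bool" where
  "bot_then_forever out p k v \<longleftrightarrow>
     (\<exists>t0. (\<forall>t<t0. out t p k = None) \<and> (\<forall>t\<ge>t0. out t p k = Some v))"

definition PROP_det :: "('p, 'b, bool) detector" where
  "PROP_det E inp out \<longleftrightarrow>
     (\<forall>p k b q tm. eventually_always_in inp p k b \<and> mined E b = Some (q, tm) \<longrightarrow>
        (received_by_all E b \<longrightarrow> bot_then_forever out p k True) \<and>
        (delivered_only_within_partition E b \<longrightarrow> bot_then_forever out p k False))"

datatype age = Old | New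

definition AGE_det :: "('p, 'b, age) detector" where
  "AGE_det E inp out \<longleftrightarrow>
     (\<forall>p k b q tm. eventually_always_in inp p k b \<and> mined E b = Some (q, tm) \<longrightarrow>
        (mined_before_split E tm \<longrightarrow> bot_then_forever out p k Old) \<and>
        (\<not> mined_before_split E tm \<longrightarrow> bot_then_forever out p k New))"

(* A transformation algorithm, run at every peer p: at time t it writes the
   input variables of the underlying detector A (gi) and the output variables of
   the emulated detector B (go), as functions of p's local history of B's input
   variables (written by ALG) and of A's output variables. *)
definition causal_transform ::
  "('p \<Rightarrow> nat \<Rightarrow> (nat \<Rightarrow> 'b \<Rightarrow> 'b option) \<Rightarrow> (nat \<Rightarrow> 'b \<Rightarrow> 'oa option) \<Rightarrow> 'b \<Rightarrow> 'b option)
   \<Rightarrow> ('p \<Rightarrow> nat \<Rightarrow> (nat \<Rightarrow> 'b \<Rightarrow> 'b option) \<Rightarrow> (nat \<Rightarrow> 'b \<Rightarrow> 'oa option) \<Rightarrow> 'b \<Rightarrow> 'ob option)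
   \<Rightarrow> bool" where
  "causal_transform gi go \<longleftrightarrow>
     (\<forall>p t hi hi' ho ho'.
        (\<forall>s\<le>t. hi s = hi' s) \<and> (\<forall>s<t. ho s = ho' s) \<longrightarrow> gi p t hi ho = gi p t hi' ho') \<and>
     (\<forall>p t hi hi' ho ho'.
        (\<forall>s\<le>t. hi s = hi' s) \<and> (\<forall>s\<le>t. ho s = ho' s) \<longrightarrow> go p t hi ho = go p t hi' ho')"

definition weaker :: "('p, 'b, 'oa) detector \<Rightarrow> ('p, 'b, 'ob) detector \<Rightarrow> bool" where
  "weaker A B \<longleftrightarrow>
     (\<exists>gi go. causal_transform gi go \<and>
        (\<forall>E inB outA. valid_env E \<longrightarrow>
           A E (\<lambda>t p. gi p t (\<lambda>s. inB s p) (\<lambda>s. outA s p)) outA \<longrightarrow>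
           B E inB (\<lambda>t p. go p t (\<lambda>s. inB s p) (\<lambda>s. outA s p))))"

definition det_equiv :: "('p, 'b, 'oa) detector \<Rightarrow> ('p, 'b, 'ob) detector \<Rightarrow> bool" where
  "det_equiv A B \<longleftrightarrow> weaker A B \<and> weaker B A"

end

theory Submission
  imports Defs
begin

text \<open>In an admissible environment a block mined by ALG reaches all peers exactly when it
  was mined before the split, and is confined to one partition exactly when it was mined
  after it. Hence either detector is obtained from the other by forwarding the inputs
  unchanged and relabelling the outputs (\<open>True \<leftrightarrow> Old\<close>, \<open>False \<leftrightarrow> New\<close>).\<close>

lemma received_by_all_iff_mined_before_split:
  assumes "valid_env E" and "mined E b = Some (q, tm)"
  shows "received_by_all E b \<longleftrightarrow> mined_before_split E tm"
proof
  assume all: "received_by_all E b"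
  show "mined_before_split E tm"
  proof (rule ccontr)
    assume after: "\<not> mined_before_split E tm"
    then have "split_time E \<noteq> None"
      unfolding mined_before_split_def by (auto split: option.splits)
    with assms(1) have "side E \<noteq> {}" "side E \<noteq> UNIV"
      unfolding valid_env_def by auto
    moreover have "\<forall>p. recv E b p \<longleftrightarrow> p \<in> partition_of E q"
      using assms after unfolding valid_env_def by (metis (no_types, lifting))
    ultimately show False
      using all unfolding received_by_all_def partition_of_def by (auto split: if_splits)
  qed
next
  assume "mined_before_split E tm"
  then show "received_by_all E b"
    using assms unfolding valid_env_def received_by_all_def by (metis (no_types, lifting))
qed

lemma delivered_only_within_partition_iff_not_mined_before_split:
  assumes "valid_env E" and "mined E b = Some (q, tm)"
  shows "delivered_only_within_partition E b \<longleftrightarrow> \<not> mined_before_split E tm"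
proof
  assume confined: "delivered_only_within_partition E b"
  then obtain P where P: "P \<in> {side E, - side E}" "\<forall>p. recv E b p \<longleftrightarrow> p \<in> P"
    unfolding delivered_only_within_partition_def by blast
  from confined assms(1) have "side E \<noteq> {}" "side E \<noteq> UNIV"
    unfolding delivered_only_within_partition_def valid_env_def by auto
  with P have "\<not> received_by_all E b"
    unfolding received_by_all_def by auto
  with assms show "\<not> mined_before_split E tm"
    by (simp add: received_by_all_iff_mined_before_split)
next
  assume after: "\<not> mined_before_split E tm"
  then have "split_time E \<noteq> None"
    unfolding mined_before_split_def by (auto split: option.splits)
  moreover have "\<forall>p. recv E b p \<longleftrightarrow> p \<in> partition_of E q"
    using assms after unfolding valid_env_def by (metis (no_types, lifting))
  ultimately show "delivered_only_within_partition E b"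
    unfolding delivered_only_within_partition_def partition_of_def by (auto split: if_splits)
qed

lemma bot_then_forever_map_option:
  "bot_then_forever out p k v \<Longrightarrow>
   bot_then_forever (\<lambda>t p k. map_option f (out t p k)) p k (f v)"
  unfolding bot_then_forever_def by auto

lemma causal_transform_relabel:
  "causal_transform (\<lambda>p t hi ho. hi t) (\<lambda>p t hi ho k. map_option f (ho t k))"
  unfolding causal_transform_def by auto

lemma weaker_by_relabel:
  assumes "\<And>E inp out. valid_env E \<Longrightarrow> A E inp out \<Longrightarrow>
             B E inp (\<lambda>t p k. map_option f (out t p k))"
  shows "weaker A B"
  unfolding weaker_def
  using causal_transform_relabel[of f] assms by fastforce

lemma AGE_det_of_PROP_det:
  assumes "valid_env E" and "PROP_det E inp out"
  shows "AGE_det E inp (\<lambda>t p k. map_option (\<lambda>x. if x then Old else New) (out t p k))"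
  unfolding AGE_det_def
proof (intro allI impI)
  fix p k b q tm
  assume h: "eventually_always_in inp p k b \<and> mined E b = Some (q, tm)"
  with assms show "(mined_before_split E tm \<longrightarrow>
      bot_then_forever (\<lambda>t p k. map_option (\<lambda>x. if x then Old else New) (out t p k)) p k Old) \<and>
    (\<not> mined_before_split E tm \<longrightarrow>
      bot_then_forever (\<lambda>t p k. map_option (\<lambda>x. if x then Old else New) (out t p k)) p k New)"
    unfolding PROP_det_def
    using bot_then_forever_map_option[of out p k _ "\<lambda>x. if x then Old else New"]
    by (fastforce simp: received_by_all_iff_mined_before_split
        delivered_only_within_partition_iff_not_mined_before_split)
qed

lemma PROP_det_of_AGE_det:
  assumes "valid_env E" and "AGE_det E inp out"
  shows "PROP_det E inp (\<lambda>t p k. map_option (\<lambda>x. x = Old) (out t p k))"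
  unfolding PROP_det_def
proof (intro allI impI)
  fix p k b q tm
  assume h: "eventually_always_in inp p k b \<and> mined E b = Some (q, tm)"
  with assms show "(received_by_all E b \<longrightarrow>
      bot_then_forever (\<lambda>t p k. map_option (\<lambda>x. x = Old) (out t p k)) p k True) \<and>
    (delivered_only_within_partition E b \<longrightarrow>
      bot_then_forever (\<lambda>t p k. map_option (\<lambda>x. x = Old) (out t p k)) p k False)"
    unfolding AGE_det_def
    using bot_then_forever_map_option[of out p k _ "\<lambda>x. x = Old"]
    by (fastforce simp: received_by_all_iff_mined_before_split
        delivered_only_within_partition_iff_not_mined_before_split)
qed

theorem lemma2:
  shows "det_equiv (PROP_det :: ('p::finite, 'b, bool) detector) (AGE_det :: ('p, 'b, age) detector)"
proof -
  have "weaker (PROP_det :: ('p, 'b, bool) detector) (AGE_det :: ('p, 'b, age) detector)"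
    by (rule weaker_by_relabel[where f = "\<lambda>x. if x then Old else New"])
      (rule AGE_det_of_PROP_det)
  moreover have "weaker (AGE_det :: ('p, 'b, age) detector) (PROP_det :: ('p, 'b, bool) detector)"
    by (rule weaker_by_relabel[where f = "\<lambda>x. x = Old"]) (rule PROP_det_of_AGE_det)
  ultimately show ?thesis
    unfolding det_equiv_def ..
qed

end
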